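(* For $n\ge 1$, $$(\mathfrak C_0+\mathfrak C_0+\mathfrak C_0)^n=(2n-1)(n-1)\mathfrak C_{2n}+n(2n-1)(2n-3)^2\mathfrak C_{2n-2}.$$
   Context: The numbers $\mathfrak C_{2n}$ (Cauchy numbers with level $2$) are defined by $\frac{t}{{\rm arcsinh}\,t}=\sum_{n=0}^\infty\mathfrak C_{2n}\frac{t^{2n}}{(2n)!}$. Convolution notation: $(\mathfrak C_{2j_1}+\cdots+\mathfrak C_{2j_k})^n:=\sum_{i_1+\cdots+i_k=n,\ i_1,\dots,i_k\ge0}\frac{(2n)!}{(2i_1)!\cdots(2i_k)!}\mathfrak C_{2i_1+2j_1}\cdots\mathfrak C_{2i_k+2j_k}$. *)

theory Defs
  imports "HOL-Analysis.Analysis"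
begin

definition t_over_arsinh :: "real \<Rightarrow> real" where
  "t_over_arsinh t = (if t = 0 then 1 else t / arsinh t)"

text \<open>Cauchy numbers with level 2: frakC k is the k-th Taylor coefficient times k!
  of t / arcsinh t at 0, i.e. the k-th derivative at 0. The paper's C_{2n} is frakC (2*n).\<close>
definition frakC :: "nat \<Rightarrow> real" where
  "frakC k = (deriv ^^ k) t_over_arsinh 0"

text \<open>Convolution (C_{2j1} + C_{2j2} + C_{2j3})^n.\<close>
definition conv3 :: "nat \<Rightarrow> nat \<Rightarrow> nat \<Rightarrow> nat \<Rightarrow> real" where
  "conv3 j1 j2 j3 n =
     (\<Sum>(i1, i2, i3) \<in> {(i1, i2, i3). i1 + i2 + i3 = n}.
        fact (2*n) / (fact (2*i1) * fact (2*i2) * fact (2*i3))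
        * frakC (2*i1 + 2*j1) * frakC (2*i2 + 2*j2) * frakC (2*i3 + 2*j3))"

end

(*
  Let F(t) = t / arsinh t, so that C_k = k! [t^k] F. Since F is even, (C_0 + C_0 + C_0)^n is
  (2n)! [t^(2n)] F^3. Write F = 1 / a with a = arsinh t / t, and b = (t a)' = 1 / sqrt (1 + t^2).
  The relations (1 + t^2) b' = - t b and (1 + t^2) b^2 = 1 turn F = 1 / a into the differential
  equation 2 F^3 = (T - 1)(T - 2) F + t^2 (T - 1)^2 F with T = t d/dt. Since T multiplies the
  coefficient of t^m by m, comparing coefficients of t^(2n) gives the identity.

  The power series of arsinh is the integral of the series b defined by its coefficient recurrence.
  It sums to 1 / sqrt (1 + t^2) since b(t) sqrt (1 + t^2) has derivative zero.
*)
theory Submission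
  imports Defs "HOL-Computational_Algebra.Formal_Power_Series"
begin

unbundle no vec_syntax and fps_syntax

lemma conv_radius_ge_1_if_bounded:
  fixes a :: "nat \<Rightarrow> 'a::{banach, real_normed_div_algebra}"
  assumes "\<And>n. norm (a n) \<le> C"
  shows "conv_radius a \<ge> 1"
proof (rule conv_radius_geI_ex')
  fix r :: real
  assume r: "0 < r" "ereal r < 1"
  show "summable (\<lambda>n. a n * of_real r ^ n)"
  proof (rule summable_comparison_test')
    show "summable (\<lambda>n. C * r ^ n)"
      using r by (intro summable_mult summable_geometric) auto
    show "norm (a n * of_real r ^ n) \<le> C * r ^ n" for n
      using r assms[of n] by (simp add: norm_mult norm_power mult_right_mono)
  qed
qed

lemma norm_less_fps_conv_radius:
  fixes F :: "'a::{banach, real_normed_div_algebra} fps"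
  assumes "norm z < 1" "fps_conv_radius F \<ge> 1"
  shows "ereal (norm z) < fps_conv_radius F"
  using assms by (metis ereal_less(3) less_ereal.simps(1) less_le_trans)

lemma higher_deriv_0_eq_fps_nth:
  fixes F :: "'a::{banach, real_normed_field} fps"
  assumes "f has_fps_expansion F"
  shows "(deriv ^^ n) f 0 = fact n * F $ n"
proof -
  have "(deriv ^^ n) f has_fps_expansion (fps_deriv ^^ n) F"
    by (induction n) (simp_all add: assms has_fps_expansion_deriv)
  then have "(deriv ^^ n) f 0 = eval_fps ((fps_deriv ^^ n) F) 0"
    unfolding has_fps_expansion_def using eventually_nhds_x_imp_x by force
  then show ?thesis
    by (simp add: eval_fps_at_0 fps_0th_higher_deriv)
qed

lemma fps_compose_uminus_X_eq_iff:
  fixes F :: "'a::{idom, ring_char_0} fps"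
  shows "F oo - fps_X = F \<longleftrightarrow> (\<forall>n. odd n \<longrightarrow> F $ n = 0)"
  by (auto simp: fps_compose_uminus' fps_eq_iff minus_one_power_iff)

lemma fps_mult3_nth:
  fixes P Q R :: "'a::comm_semiring_1 fps"
  shows "(P * Q * R) $ n = (\<Sum>(i, j, k) \<in> {(i, j, k). i + j + k = n}. P $ i * Q $ j * R $ k)"
proof -
  have "(P * Q * R) $ n = (\<Sum>m = 0..n. \<Sum>i = 0..m. P $ i * Q $ (m - i) * R $ (n - m))"
    by (simp add: fps_mult_nth sum_distrib_right)
  also have "\<dots> = (\<Sum>(m, i) \<in> (SIGMA m:{0..n}. {0..m}). P $ i * Q $ (m - i) * R $ (n - m))"
    by (rule sum.Sigma) auto
  also have "\<dots> = (\<Sum>(i, j, k) \<in> {(i, j, k). i + j + k = n}. P $ i * Q $ j * R $ k)"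
    by (rule sum.reindex_bij_witness[where i = "\<lambda>(i, j, k). (i + j, i)" and j = "\<lambda>(m, i). (i, m - i, n - m)"])
      auto
  finally show ?thesis .
qed

lemma finite_triples_with_sum: "finite {(i, j, k :: nat). i + j + k = n}"
  by (rule finite_subset[of _ "{..n} \<times> {..n} \<times> {..n}"]) auto

lemma fps_cube_nth_even:
  fixes F :: "'a::comm_semiring_1 fps"
  assumes odd_nth: "\<And>m. odd m \<Longrightarrow> F $ m = 0"
  shows "(F ^ 3) $ (2 * n) = (\<Sum>(i, j, k) \<in> {(i, j, k). i + j + k = n}. F $ (2 * i) * F $ (2 * j) * F $ (2 * k))"
proof -
  define g where "g = (\<lambda>(i, j, k). F $ i * F $ j * F $ k)"
  define double :: "nat \<times> nat \<times> nat \<Rightarrow> nat \<times> nat \<times> nat" where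
    "double = (\<lambda>(i, j, k). (2 * i, 2 * j, 2 * k))"
  have "(F ^ 3) $ (2 * n) = sum g {(i, j, k). i + j + k = 2 * n}"
    by (simp add: power3_eq_cube fps_mult3_nth g_def)
  also have "\<dots> = sum g (double ` {(i, j, k). i + j + k = n})"
  proof (rule sum.mono_neutral_right[OF finite_triples_with_sum])
    show "double ` {(i, j, k). i + j + k = n} \<subseteq> {(i, j, k). i + j + k = 2 * n}"
      by (auto simp: double_def)
    show "\<forall>t \<in> {(i, j, k). i + j + k = 2 * n} - double ` {(i, j, k). i + j + k = n}. g t = 0"
    proof (clarsimp simp: g_def)
      fix i j k :: nat
      assume "i + j + k = 2 * n" "(i, j, k) \<notin> double ` {(i, j, k). i + j + k = n}"
      then have "odd i \<or> odd j \<or> odd k"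
        by (auto simp: double_def image_iff elim!: evenE) presburger
      then show "F $ i * F $ j * F $ k = 0"
        using odd_nth by auto
    qed
  qed
  also have "\<dots> = sum (g \<circ> double) {(i, j, k). i + j + k = n}"
    by (rule sum.reindex) (auto simp: double_def inj_on_def)
  finally show ?thesis
    by (simp add: g_def double_def case_prod_beta')
qed

definition fps_euler :: "'a::comm_semiring_1 fps \<Rightarrow> 'a fps" where
  "fps_euler F = fps_X * fps_deriv F"

lemma fps_euler_nth [simp]: "fps_euler F $ n = of_nat n * F $ n"
  by (cases n) (simp_all add: fps_euler_def fps_X_mult_nth)

lemma fps_euler_zero [simp]: "fps_euler 0 = 0"
  by (simp add: fps_euler_def)

lemma fps_euler_one [simp]: "fps_euler 1 = 0"
  by (simp add: fps_euler_def)

lemma fps_euler_add: "fps_euler (F + G) = fps_euler F + fps_euler G"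
  by (simp add: fps_euler_def distrib_left)

lemma fps_euler_mult: "fps_euler (F * G) = F * fps_euler G + fps_euler F * G"
  by (simp add: fps_euler_def algebra_simps)

(* The coefficients of 1 / sqrt (1 + x^2); the recurrence is (1 + x^2) b' = - x b. *)
fun inv_sqrt_coeff :: "nat \<Rightarrow> real" where
  "inv_sqrt_coeff 0 = 1"
| "inv_sqrt_coeff (Suc 0) = 0"
| "inv_sqrt_coeff (Suc (Suc m)) = - (real m + 1) / (real m + 2) * inv_sqrt_coeff m"

lemma abs_inv_sqrt_coeff_le_1: "\<bar>inv_sqrt_coeff k\<bar> \<le> 1"
proof (induction k rule: inv_sqrt_coeff.induct)
  case (3 m)
  have "\<bar>inv_sqrt_coeff (Suc (Suc m))\<bar> = (real m + 1) / (real m + 2) * \<bar>inv_sqrt_coeff m\<bar>"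
    by (simp add: abs_mult)
  also have "\<dots> \<le> 1 * 1"
    using 3 by (intro mult_mono) auto
  finally show ?case by simp
qed auto

lemma inv_sqrt_coeff_odd: "odd k \<Longrightarrow> inv_sqrt_coeff k = 0"
  by (induction k rule: inv_sqrt_coeff.induct) auto

definition inv_sqrt_fps :: "real fps" where
  "inv_sqrt_fps = Abs_fps inv_sqrt_coeff"

definition arsinh_fps :: "real fps" where
  "arsinh_fps = fps_integral0 inv_sqrt_fps"

lemma arsinh_fps_nth: "arsinh_fps $ n = (if n = 0 then 0 else inv_sqrt_coeff (n - 1) / real n)"
  by (cases n) (simp_all add: arsinh_fps_def inv_sqrt_fps_def field_simps)

lemma fps_deriv_arsinh_fps: "fps_deriv arsinh_fps = inv_sqrt_fps"
  by (simp add: arsinh_fps_def fps_deriv_fps_integral)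

lemma fps_conv_radius_inv_sqrt_fps: "fps_conv_radius inv_sqrt_fps \<ge> 1"
  unfolding fps_conv_radius_def inv_sqrt_fps_def
  by (rule conv_radius_ge_1_if_bounded[where C = 1]) (simp add: abs_inv_sqrt_coeff_le_1)

lemma fps_conv_radius_arsinh_fps: "fps_conv_radius arsinh_fps \<ge> 1"
  unfolding fps_conv_radius_def
proof (rule conv_radius_ge_1_if_bounded[where C = 1])
  fix n
  have "\<bar>inv_sqrt_coeff (n - 1)\<bar> / real n \<le> 1" if "n > 0"
    using that abs_inv_sqrt_coeff_le_1[of "n - 1"] by (simp add: divide_le_eq order_trans)
  then show "norm (arsinh_fps $ n) \<le> 1"
    by (simp add: arsinh_fps_nth)
qed

lemma inv_sqrt_fps_ode: "(1 + fps_X\<^sup>2) * fps_deriv inv_sqrt_fps + fps_X * inv_sqrt_fps = 0"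
proof (rule fps_ext)
  fix n
  show "((1 + fps_X\<^sup>2) * fps_deriv inv_sqrt_fps + fps_X * inv_sqrt_fps) $ n = 0 $ n"
  proof (cases n rule: inv_sqrt_coeff.cases)
    case (3 m)
    then show ?thesis
      by (simp add: inv_sqrt_fps_def distrib_right fps_X_power_mult_nth) (simp add: field_simps)
  qed (simp_all add: inv_sqrt_fps_def distrib_right fps_X_power_mult_nth)
qed

lemma inv_sqrt_fps_square: "(1 + fps_X\<^sup>2) * inv_sqrt_fps\<^sup>2 = 1"
proof -
  define D where "D = (1 + fps_X\<^sup>2) * inv_sqrt_fps\<^sup>2"
  have "fps_deriv D = 2 * inv_sqrt_fps * ((1 + fps_X\<^sup>2) * fps_deriv inv_sqrt_fps + fps_X * inv_sqrt_fps)"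
    unfolding D_def by (simp add: fps_deriv_power power2_eq_square algebra_simps numeral_2_eq_2)
  then have "D = fps_const (D $ 0)"
    by (simp add: inv_sqrt_fps_ode)
  moreover have "D $ 0 = 1"
    by (simp add: D_def inv_sqrt_fps_def power2_eq_square fps_mult_nth distrib_right)
  ultimately show ?thesis
    unfolding D_def by simp
qed

lemma eval_inv_sqrt_fps_ode:
  assumes "\<bar>y\<bar> < 1"
  shows "(1 + y\<^sup>2) * eval_fps (fps_deriv inv_sqrt_fps) y + y * eval_fps inv_sqrt_fps y = 0"
proof -
  define P :: "real fps" where "P = 1 + fps_X\<^sup>2"
  define B' where "B' = fps_deriv inv_sqrt_fps"
  have in_radius: "ereal (norm y) < fps_conv_radius F" if "fps_conv_radius F \<ge> 1" for F :: "real fps"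
    using assms that by (intro norm_less_fps_conv_radius) simp_all
  have P: "fps_conv_radius P = \<infinity>"
    using fps_conv_radius_add[of 1 "fps_X\<^sup>2 :: real fps"] by (simp add: P_def)
  have B': "fps_conv_radius B' \<ge> 1"
    unfolding B'_def using fps_conv_radius_inv_sqrt_fps fps_conv_radius_deriv order_trans by blast
  have PB': "fps_conv_radius (P * B') \<ge> 1"
    using fps_conv_radius_mult[of P B'] P B' by simp
  have XB: "fps_conv_radius (fps_X * inv_sqrt_fps) \<ge> 1"
    using fps_conv_radius_mult[of fps_X inv_sqrt_fps] fps_conv_radius_inv_sqrt_fps by simp
  have "0 = eval_fps (P * B' + fps_X * inv_sqrt_fps) y"
    by (simp add: P_def B'_def inv_sqrt_fps_ode)
  also have "\<dots> = eval_fps (P * B') y + eval_fps (fps_X * inv_sqrt_fps) y"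
    by (intro eval_fps_add in_radius PB' XB)
  also have "eval_fps (P * B') y = eval_fps P y * eval_fps B' y"
    by (intro eval_fps_mult in_radius B') (simp add: P)
  also have "eval_fps (fps_X * inv_sqrt_fps) y = y * eval_fps inv_sqrt_fps y"
    by (subst eval_fps_mult) (use in_radius[OF fps_conv_radius_inv_sqrt_fps] in auto)
  also have "eval_fps P y = 1 + y\<^sup>2"
    by (simp add: P_def eval_fps_add)
  finally show ?thesis
    by (simp add: B'_def)
qed

lemma eval_inv_sqrt_fps:
  assumes "\<bar>x\<bar> < 1"
  shows "eval_fps inv_sqrt_fps x = 1 / sqrt (x\<^sup>2 + 1)"
proof -
  have "\<exists>c. \<forall>y\<in>ball 0 1. eval_fps inv_sqrt_fps y * sqrt (y\<^sup>2 + 1) = (c :: real)"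
  proof (rule has_field_derivative_zero_constant)
    fix y :: real
    assume "y \<in> ball 0 1"
    then have y: "\<bar>y\<bar> < 1"
      by simp
    have pos: "y\<^sup>2 + 1 > 0"
      by (simp add: add_nonneg_pos)
    have "ereal (norm y) < fps_conv_radius inv_sqrt_fps"
      using y fps_conv_radius_inv_sqrt_fps by (intro norm_less_fps_conv_radius) simp_all
    then have "((\<lambda>y. eval_fps inv_sqrt_fps y * sqrt (y\<^sup>2 + 1)) has_field_derivative
        ((y\<^sup>2 + 1) * eval_fps (fps_deriv inv_sqrt_fps) y + y * eval_fps inv_sqrt_fps y)
          / sqrt (y\<^sup>2 + 1)) (at y within ball 0 1)"
      using pos by (auto intro!: derivative_eq_intros has_field_derivative_eval_fps
          simp: field_simps real_sqrt_gt_zero)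
    then show "((\<lambda>y. eval_fps inv_sqrt_fps y * sqrt (y\<^sup>2 + 1)) has_field_derivative 0)
        (at y within ball 0 1)"
      using eval_inv_sqrt_fps_ode[OF y] by (simp add: add.commute)
  qed auto
  then obtain c where c: "\<And>y. \<bar>y\<bar> < 1 \<Longrightarrow> eval_fps inv_sqrt_fps y * sqrt (y\<^sup>2 + 1) = c"
    by force
  have "c = 1"
    using c[of 0] by (simp add: eval_fps_at_0 inv_sqrt_fps_def)
  moreover have "sqrt (x\<^sup>2 + 1) > 0"
    by (simp add: add_nonneg_pos)
  ultimately show ?thesis
    using c[OF assms] by (simp add: eq_divide_eq)
qed

lemma eval_arsinh_fps:
  assumes "\<bar>x\<bar> < 1"
  shows "eval_fps arsinh_fps x = arsinh x"
proof -
  have "\<exists>c. \<forall>y\<in>ball 0 1. eval_fps arsinh_fps y - arsinh y = (c :: real)"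
  proof (rule has_field_derivative_zero_constant)
    fix y :: real
    assume "y \<in> ball 0 1"
    then have y: "\<bar>y\<bar> < 1"
      by simp
    have "ereal (norm y) < fps_conv_radius arsinh_fps"
      using y fps_conv_radius_arsinh_fps by (intro norm_less_fps_conv_radius) simp_all
    then have "(eval_fps arsinh_fps has_field_derivative eval_fps inv_sqrt_fps y) (at y within ball 0 1)"
      using has_field_derivative_eval_fps fps_deriv_arsinh_fps by metis
    then have "((\<lambda>y. eval_fps arsinh_fps y - arsinh y) has_field_derivative
        eval_fps inv_sqrt_fps y - 1 / sqrt (y\<^sup>2 + 1)) (at y within ball 0 1)"
      by (intro derivative_intros)
    then show "((\<lambda>y. eval_fps arsinh_fps y - arsinh y) has_field_derivative 0) (at y within ball 0 1)"
      by (simp add: eval_inv_sqrt_fps[OF y])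
  qed auto
  then obtain c where c: "\<And>y. \<bar>y\<bar> < 1 \<Longrightarrow> eval_fps arsinh_fps y - arsinh y = c"
    by force
  have "c = 0"
    using c[of 0] by (simp add: eval_fps_at_0 arsinh_fps_nth)
  with c[OF assms] show ?thesis
    by simp
qed

lemma has_fps_expansion_arsinh: "arsinh has_fps_expansion arsinh_fps"
proof -
  have "eventually (\<lambda>x. x \<in> ball (0 :: real) 1) (nhds 0)"
    by (intro eventually_nhds_in_open) auto
  then have "eventually (\<lambda>x. eval_fps arsinh_fps x = arsinh x) (nhds 0)"
    by eventually_elim (simp add: eval_arsinh_fps)
  moreover have "fps_conv_radius arsinh_fps > 0"
    using fps_conv_radius_arsinh_fps by (rule less_le_trans[rotated]) simp
  ultimately show ?thesis
    by (simp add: has_fps_expansion_def)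
qed

definition t_over_arsinh_fps :: "real fps" where
  "t_over_arsinh_fps = inverse (fps_shift 1 arsinh_fps)"

lemma has_fps_expansion_t_over_arsinh: "t_over_arsinh has_fps_expansion t_over_arsinh_fps"
proof -
  have "arsinh_fps $ 1 = 1"
    by (simp add: arsinh_fps_nth)
  then have "arsinh_fps \<noteq> 0"
    by auto
  then have "subdegree arsinh_fps \<ge> 1"
    by (intro subdegree_geI) (auto simp: arsinh_fps_nth)
  then have "(\<lambda>x. if x = 0 then 1 else arsinh x / x ^ 1) has_fps_expansion fps_shift 1 arsinh_fps"
    by (rule has_fps_expansion_shift[OF has_fps_expansion_arsinh]) (simp add: arsinh_fps_nth)
  then have "(\<lambda>x. if x = 0 then 1 else arsinh x / x) has_fps_expansion fps_shift 1 arsinh_fps"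
    unfolding power_one_right .
  then have "(\<lambda>x. inverse (if x = 0 then 1 else arsinh x / x)) has_fps_expansion t_over_arsinh_fps"
    unfolding t_over_arsinh_fps_def by (intro has_fps_expansion_inverse) (simp_all add: arsinh_fps_nth)
  also have "(\<lambda>x. inverse (if x = 0 then 1 else arsinh x / x)) = t_over_arsinh"
    by (auto simp: t_over_arsinh_def fun_eq_iff)
  finally show ?thesis .
qed

lemma frakC_eq_fps_nth: "frakC k = fact k * t_over_arsinh_fps $ k"
  unfolding frakC_def by (rule higher_deriv_0_eq_fps_nth[OF has_fps_expansion_t_over_arsinh])

lemma t_over_arsinh_fps_odd_nth:
  assumes "odd n"
  shows "t_over_arsinh_fps $ n = 0"
proof -
  have "fps_shift 1 arsinh_fps oo - fps_X = fps_shift 1 arsinh_fps"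
    by (simp add: fps_compose_uminus_X_eq_iff arsinh_fps_nth inv_sqrt_coeff_odd)
  then have "t_over_arsinh_fps oo - fps_X = t_over_arsinh_fps"
    unfolding t_over_arsinh_fps_def by (simp add: fps_inverse_compose arsinh_fps_nth)
  then show ?thesis
    using assms by (simp add: fps_compose_uminus_X_eq_iff)
qed

lemma conv3_0_0_0_eq_fps_nth: "conv3 0 0 0 n = fact (2 * n) * (t_over_arsinh_fps ^ 3) $ (2 * n)"
proof -
  have "conv3 0 0 0 n = fact (2 * n) * (\<Sum>(i, j, k) \<in> {(i, j, k). i + j + k = n}.
      t_over_arsinh_fps $ (2 * i) * t_over_arsinh_fps $ (2 * j) * t_over_arsinh_fps $ (2 * k))"
    unfolding conv3_def frakC_eq_fps_nth sum_distrib_left by (intro sum.cong refl) clarsimp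
  then show ?thesis
    by (simp add: fps_cube_nth_even t_over_arsinh_fps_odd_nth)
qed

(* Written with the Euler operator so that the coefficient of x^(j + 2) needs no case split. *)
lemma t_over_arsinh_fps_ode:
  defines "F \<equiv> t_over_arsinh_fps"
  shows "2 * F ^ 3 = fps_euler (fps_euler F) - 3 * fps_euler F + 2 * F
    + fps_X\<^sup>2 * (fps_euler (fps_euler F) - 2 * fps_euler F + F)"
proof -
  define a where "a = fps_shift 1 arsinh_fps"
  define b where "b = inv_sqrt_fps"
  have inverse: "F * a = 1"
    unfolding F_def t_over_arsinh_fps_def a_def by (rule inverse_mult_eq_1) (simp add: arsinh_fps_nth)
  have inverse': "fps_euler a * F + a * fps_euler F = 0"
    using arg_cong[OF inverse, of fps_euler] by (simp add: fps_euler_mult algebra_simps)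
  have inverse'': "fps_euler (fps_euler a) * F + 2 * fps_euler a * fps_euler F + a * fps_euler (fps_euler F) = 0"
    using arg_cong[OF inverse', of fps_euler] by (simp add: fps_euler_mult fps_euler_add algebra_simps)
  have arsinh_fps_eq: "arsinh_fps = fps_X * a"
    unfolding a_def by (simp add: fps_eq_iff fps_X_mult_nth arsinh_fps_nth)
  have b_eq: "b = a + fps_euler a"
    unfolding b_def fps_deriv_arsinh_fps[symmetric] arsinh_fps_eq by (simp add: fps_euler_def)
  have euler_b: "fps_euler b = fps_euler a + fps_euler (fps_euler a)"
    by (simp add: b_eq fps_euler_add)
  have "(1 + fps_X\<^sup>2) * fps_euler b + fps_X\<^sup>2 * b = fps_X * ((1 + fps_X\<^sup>2) * fps_deriv b + fps_X * b)"
    by (simp add: fps_euler_def algebra_simps power2_eq_square)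
  then have ode: "(1 + fps_X\<^sup>2) * fps_euler b + fps_X\<^sup>2 * b = 0"
    by (simp add: b_def inv_sqrt_fps_ode)
  have square: "(1 + fps_X\<^sup>2) * b\<^sup>2 = 1"
    by (simp add: b_def inv_sqrt_fps_square)
  show ?thesis
    using inverse inverse' inverse'' b_eq euler_b ode square by algebra
qed

lemma t_over_arsinh_fps_cube_nth:
  defines "F \<equiv> t_over_arsinh_fps"
  shows "2 * (F ^ 3) $ (j + 2) = (real j + 1) * real j * F $ (j + 2) + (real j - 1)\<^sup>2 * F $ j"
proof -
  have "2 * (F ^ 3) $ (j + 2) = (2 * F ^ 3) $ (j + 2)"
    by simp
  also have "\<dots> = (real j + 1) * real j * F $ (j + 2) + (real j - 1)\<^sup>2 * F $ j"
    unfolding F_def t_over_arsinh_fps_ode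
    by (simp add: fps_X_power_mult_nth numeral_fps_const) (simp add: algebra_simps power2_eq_square)
  finally show ?thesis .
qed

theorem theorem5:
  fixes n :: nat
  assumes "n \<ge> 1"
  shows "conv3 0 0 0 n =
    (2 * real n - 1) * (real n - 1) * frakC (2*n)
    + real n * (2 * real n - 1) * (2 * real n - 3)^2 * frakC (2*n - 2)"
proof -
  obtain k where n: "n = k + 1"
    using assms by (metis le_add_diff_inverse2)
  then have index: "2 * n = 2 * k + 2" "2 * n - 2 = 2 * k"
    by simp_all
  let ?F = t_over_arsinh_fps
  have fact: "fact (2 * k + 2) = (2 * real k + 2) * (2 * real k + 1) * fact (2 * k)"
    by (simp add: numeral_2_eq_2 algebra_simps)
  have conv3: "conv3 0 0 0 n = (real k + 1) * (2 * real k + 1) * fact (2 * k) * (2 * (?F ^ 3) $ (2 * k + 2))"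
    unfolding conv3_0_0_0_eq_fps_nth index fact by (simp add: algebra_simps)
  have cube: "2 * (?F ^ 3) $ (2 * k + 2)
      = (2 * real k + 1) * (2 * real k) * ?F $ (2 * k + 2) + (2 * real k - 1)\<^sup>2 * ?F $ (2 * k)"
    using t_over_arsinh_fps_cube_nth[of "2 * k"] by simp
  have frakC: "frakC (2 * n) = (2 * real k + 2) * (2 * real k + 1) * fact (2 * k) * ?F $ (2 * k + 2)"
    "frakC (2 * n - 2) = fact (2 * k) * ?F $ (2 * k)"
    unfolding frakC_eq_fps_nth index fact by simp_all
  show ?thesis
    unfolding conv3 cube frakC by (simp add: n algebra_simps power2_eq_square)
qed

end
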